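(* Let $J,J^r:\mathbb{R}^n\to\mathbb{R}^k$ be continuously differentiable and let $\epsilon\in[0,\infty)^k$ satisfy $\sup_{u\in\mathbb{R}^n}\|\nabla J_i(u)-\nabla J_i^r(u)\|_2\le\epsilon_i$ for all $i\in\{1,\dots,k\}$. Let $P_c$ and $P_c^r$ denote the Pareto critical sets of $J$ and $J^r$, respectively, and define $$P_1^r:=\Big\{u\in\mathbb{R}^n:\min_{\alpha\in\Delta_k}\|DJ^r(u)^\top\alpha\|_2^2\le\|\epsilon\|_\infty^2\Big\},\qquad P_2^r:=\Big\{u\in\mathbb{R}^n:\min_{\alpha\in\Delta_k}\big(\|DJ^r(u)^\top\alpha\|_2^2-(\alpha^\top\epsilon)^2\big)\le 0\Big\}.$$ Then $P_c\subseteq P_2^r\subseteq P_1^r$ and $P_c^r\subseteq P_2^r\subseteq P_1^r$.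
   Context: $\Delta_k:=\{\alpha\in[0,\infty)^k:\sum_{i=1}^k\alpha_i=1\}$. For differentiable $J:\mathbb{R}^n\to\mathbb{R}^k$, $DJ(u)\in\mathbb{R}^{k\times n}$ is the Jacobian, so $DJ(u)^\top\alpha=\sum_i\alpha_i\nabla J_i(u)$. The Pareto critical set of $J$ is the set of all $u\in\mathbb{R}^n$ for which there exists $\alpha\in\Delta_k$ with $DJ(u)^\top\alpha=0$. *)

theory Defs
  imports "HOL-Analysis.Analysis"
begin

definition grad :: "(real^'n \<Rightarrow> real^'k) \<Rightarrow> 'k \<Rightarrow> real^'n \<Rightarrow> real^'n" where
  "grad J i u = (THE g. GDERIV (\<lambda>v. J v $ i) u :> g)"

definition jac :: "(real^'n \<Rightarrow> real^'k) \<Rightarrow> real^'n \<Rightarrow> real^'n^'k" where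
  "jac J u = (\<chi> i. grad J i u)"

definition C1_map :: "(real^'n \<Rightarrow> real^'k) \<Rightarrow> bool" where
  "C1_map J \<longleftrightarrow> (\<forall>u. J differentiable (at u)) \<and> (\<forall>i. continuous_on UNIV (grad J i))"

definition std_simplex :: "(real^'k) set" where
  "std_simplex = {\<alpha>. (\<forall>i. 0 \<le> \<alpha> $ i) \<and> (\<Sum>i\<in>UNIV. \<alpha> $ i) = 1}"

definition pareto_critical :: "(real^'n \<Rightarrow> real^'k) \<Rightarrow> (real^'n) set" where
  "pareto_critical J = {u. \<exists>\<alpha>\<in>std_simplex. transpose (jac J u) *v \<alpha> = 0}"

definition P1 :: "(real^'n \<Rightarrow> real^'k) \<Rightarrow> real^'k \<Rightarrow> (real^'n) set" where
  "P1 Jr \<epsilon> = {u. (INF \<alpha>\<in>std_simplex. (norm (transpose (jac Jr u) *v \<alpha>))^2) \<le> (infnorm \<epsilon>)^2}"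

definition P2 :: "(real^'n \<Rightarrow> real^'k) \<Rightarrow> real^'k \<Rightarrow> (real^'n) set" where
  "P2 Jr \<epsilon> = {u. (INF \<alpha>\<in>std_simplex. (norm (transpose (jac Jr u) *v \<alpha>))^2 - (\<alpha> \<bullet> \<epsilon>)^2) \<le> 0}"

end

theory Submission
  imports Defs
begin

text \<open>For \<alpha> in the simplex, the vectors \<open>DJ\<^sup>r(u)\<^sup>T\<alpha>\<close> and \<open>DJ(u)\<^sup>T\<alpha>\<close> differ in norm by
  at most \<open>\<alpha> \<bullet> \<epsilon>\<close> (triangle inequality over the weighted gradients). Hence
  \<open>norm (DJ\<^sup>r(u)\<^sup>T\<alpha>) \<le> \<alpha> \<bullet> \<epsilon>\<close> at every Pareto critical point of either map, which places
  both critical sets in \<open>P\<^sub>2\<close>. Since \<open>0 \<le> \<alpha> \<bullet> \<epsilon> \<le> infnorm \<epsilon>\<close> on the simplex, the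
  objective defining \<open>P\<^sub>2\<close> dominates that of \<open>P\<^sub>1\<close> minus \<open>(infnorm \<epsilon>)\<^sup>2\<close>, giving
  \<open>P\<^sub>2 \<subseteq> P\<^sub>1\<close>.\<close>

lemma transpose_jac_mult:
  "transpose (jac J u) *v \<alpha> = (\<Sum>i\<in>UNIV. \<alpha> $ i *\<^sub>R grad J i u)"
  by (simp add: vec_eq_iff matrix_vector_mult_def transpose_def jac_def sum_component mult.commute)

lemma std_simplex_nonempty: "std_simplex \<noteq> ({} :: (real^'k) set)"
proof -
  have "(\<chi> i. 1 / real CARD('k)) \<in> (std_simplex :: (real^'k) set)"
    by (simp add: std_simplex_def)
  then show ?thesis by blast
qed

lemma std_simplex_inner_nonneg:
  assumes "\<alpha> \<in> std_simplex" "\<forall>i. 0 \<le> \<epsilon> $ i"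
  shows "0 \<le> \<alpha> \<bullet> \<epsilon>"
  using assms unfolding std_simplex_def inner_vec_def by (auto intro!: sum_nonneg)

lemma std_simplex_inner_le_infnorm:
  fixes \<epsilon> :: "real^'k"
  assumes "\<alpha> \<in> std_simplex"
  shows "\<alpha> \<bullet> \<epsilon> \<le> infnorm \<epsilon>"
proof -
  have nonneg: "\<forall>i. 0 \<le> \<alpha> $ i" and sum_one: "(\<Sum>i\<in>UNIV. \<alpha> $ i) = 1"
    using assms by (auto simp: std_simplex_def)
  have "\<alpha> \<bullet> \<epsilon> = (\<Sum>i\<in>UNIV. \<alpha> $ i * \<epsilon> $ i)" by (simp add: inner_vec_def)
  also have "\<dots> \<le> (\<Sum>i\<in>UNIV. \<alpha> $ i * infnorm \<epsilon>)"
    using nonneg component_le_infnorm_cart[of \<epsilon>]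
    by (intro sum_mono) (meson abs_ge_self mult_left_mono order_trans)
  also have "\<dots> = infnorm \<epsilon>" using sum_one by (simp add: sum_distrib_right[symmetric])
  finally show ?thesis .
qed

lemma std_simplex_inner_square_le:
  fixes \<epsilon> :: "real^'k"
  assumes "\<alpha> \<in> std_simplex" "\<forall>i. 0 \<le> \<epsilon> $ i"
  shows "(\<alpha> \<bullet> \<epsilon>)\<^sup>2 \<le> (infnorm \<epsilon>)\<^sup>2"
  using std_simplex_inner_nonneg[OF assms] std_simplex_inner_le_infnorm[OF assms(1)]
  by (simp add: power_mono)

lemma norm_transpose_jac_diff_le:
  assumes "\<alpha> \<in> std_simplex" and "\<forall>i. norm (grad J i u - grad Jr i u) \<le> \<epsilon> $ i"
  shows "norm (transpose (jac Jr u) *v \<alpha> - transpose (jac J u) *v \<alpha>) \<le> \<alpha> \<bullet> \<epsilon>"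
proof -
  have nonneg: "\<forall>i. 0 \<le> \<alpha> $ i" using assms(1) by (simp add: std_simplex_def)
  have "norm (transpose (jac Jr u) *v \<alpha> - transpose (jac J u) *v \<alpha>)
      = norm (\<Sum>i\<in>UNIV. \<alpha> $ i *\<^sub>R (grad Jr i u - grad J i u))"
    unfolding transpose_jac_mult by (simp add: sum_subtractf scaleR_diff_right)
  also have "\<dots> \<le> (\<Sum>i\<in>UNIV. norm (\<alpha> $ i *\<^sub>R (grad Jr i u - grad J i u)))"
    by (rule norm_sum)
  also have "\<dots> \<le> (\<Sum>i\<in>UNIV. \<alpha> $ i * \<epsilon> $ i)"
    using nonneg assms(2) by (intro sum_mono) (simp add: mult_left_mono norm_minus_commute)
  also have "\<dots> = \<alpha> \<bullet> \<epsilon>" by (simp add: inner_vec_def)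
  finally show ?thesis .
qed

lemma bdd_below_P2_objective:
  fixes \<epsilon> :: "real^'k"
  assumes "\<forall>i. 0 \<le> \<epsilon> $ i"
  shows "bdd_below ((\<lambda>\<alpha>. (norm (transpose (jac Jr u) *v \<alpha>))\<^sup>2 - (\<alpha> \<bullet> \<epsilon>)\<^sup>2) ` std_simplex)"
proof (rule bdd_belowI2)
  fix \<alpha> :: "real^'k" assume "\<alpha> \<in> std_simplex"
  then show "- (infnorm \<epsilon>)\<^sup>2 \<le> (norm (transpose (jac Jr u) *v \<alpha>))\<^sup>2 - (\<alpha> \<bullet> \<epsilon>)\<^sup>2"
    using std_simplex_inner_square_le[OF _ assms] by (smt (verit) zero_le_power2)
qed

lemma mem_P2I:
  assumes "\<forall>i. 0 \<le> \<epsilon> $ i" "\<alpha> \<in> std_simplex"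
    and "norm (transpose (jac Jr u) *v \<alpha>) \<le> \<alpha> \<bullet> \<epsilon>"
  shows "u \<in> P2 Jr \<epsilon>"
proof -
  have "(norm (transpose (jac Jr u) *v \<alpha>))\<^sup>2 \<le> (\<alpha> \<bullet> \<epsilon>)\<^sup>2"
    using assms(3) by (simp add: power_mono)
  then have "(INF \<beta>\<in>std_simplex. (norm (transpose (jac Jr u) *v \<beta>))\<^sup>2 - (\<beta> \<bullet> \<epsilon>)\<^sup>2) \<le> 0"
    using cINF_lower[OF bdd_below_P2_objective[OF assms(1), of Jr u] assms(2)] by linarith
  then show ?thesis by (simp add: P2_def)
qed

lemma P2_subset_P1:
  fixes \<epsilon> :: "real^'k"
  assumes "\<forall>i. 0 \<le> \<epsilon> $ i"
  shows "P2 Jr \<epsilon> \<subseteq> P1 Jr \<epsilon>"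
proof
  fix u assume "u \<in> P2 Jr \<epsilon>"
  define f where "f \<alpha> = (norm (transpose (jac Jr u) *v \<alpha>))\<^sup>2" for \<alpha> :: "real^'k"
  have bdd_f: "bdd_below (f ` std_simplex)" unfolding f_def by (rule bdd_belowI2[where m=0]) simp
  have "Inf (f ` std_simplex) - (infnorm \<epsilon>)\<^sup>2 \<le> (INF \<alpha>\<in>std_simplex. f \<alpha> - (\<alpha> \<bullet> \<epsilon>)\<^sup>2)"
  proof (rule cINF_greatest[OF std_simplex_nonempty])
    fix \<alpha> :: "real^'k" assume "\<alpha> \<in> std_simplex"
    then show "Inf (f ` std_simplex) - (infnorm \<epsilon>)\<^sup>2 \<le> f \<alpha> - (\<alpha> \<bullet> \<epsilon>)\<^sup>2"
      using cINF_lower[OF bdd_f] std_simplex_inner_square_le[OF _ assms] by fastforce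
  qed
  also have "\<dots> \<le> 0" using \<open>u \<in> P2 Jr \<epsilon>\<close> by (simp add: P2_def f_def)
  finally show "u \<in> P1 Jr \<epsilon>" by (simp add: P1_def f_def)
qed

lemma pareto_critical_subset_P2:
  assumes "\<forall>i. 0 \<le> \<epsilon> $ i" and "\<forall>i u. norm (grad J i u - grad Jr i u) \<le> \<epsilon> $ i"
  shows "pareto_critical J \<subseteq> P2 Jr \<epsilon>"
proof
  fix u assume "u \<in> pareto_critical J"
  then obtain \<alpha> where \<alpha>: "\<alpha> \<in> std_simplex" and "transpose (jac J u) *v \<alpha> = 0"
    by (auto simp: pareto_critical_def)
  moreover have "norm (transpose (jac Jr u) *v \<alpha> - transpose (jac J u) *v \<alpha>) \<le> \<alpha> \<bullet> \<epsilon>"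
    using norm_transpose_jac_diff_le[OF \<alpha>] assms(2) by blast
  ultimately have "norm (transpose (jac Jr u) *v \<alpha>) \<le> \<alpha> \<bullet> \<epsilon>" by simp
  then show "u \<in> P2 Jr \<epsilon>" using mem_P2I[OF assms(1) \<alpha>] by blast
qed

theorem mainTheorem2:
  fixes J Jr :: "real^'n \<Rightarrow> real^'k" and \<epsilon> :: "real^'k"
  assumes "C1_map J" and "C1_map Jr"
    and "\<forall>i. 0 \<le> \<epsilon> $ i"
    and "\<forall>i u. norm (grad J i u - grad Jr i u) \<le> \<epsilon> $ i"
  shows "pareto_critical J \<subseteq> P2 Jr \<epsilon> \<and> P2 Jr \<epsilon> \<subseteq> P1 Jr \<epsilon> \<and>
         pareto_critical Jr \<subseteq> P2 Jr \<epsilon> \<and> P2 Jr \<epsilon> \<subseteq> P1 Jr \<epsilon>"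
proof -
  have "pareto_critical Jr \<subseteq> P2 Jr \<epsilon>"
    using pareto_critical_subset_P2[of \<epsilon> Jr Jr] assms(3) by simp
  then show ?thesis
    using pareto_critical_subset_P2[OF assms(3,4)] P2_subset_P1[OF assms(3)] by blast
qed

end
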